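(* Let $S$ be a numerical semigroup with embedding dimension $\mathrm e(S)\le 3$. Then $S$ is cyclotomic if and only if $S$ is symmetric.
   Context: A numerical semigroup is a submonoid $S$ of $(\mathbb N,+)$ with $\mathbb N\setminus S$ finite; $\mathrm e(S)$ is the cardinality of its unique minimal generating set. Its Frobenius number $\mathrm F(S)$ is the largest integer not in $S$; $S$ is symmetric if $S\cup(\mathrm F(S)-S)=\mathbb Z$. The semigroup polynomial is $\mathrm P_S(x)=(1-x)\sum_{s\in S}x^s$, and $S$ is cyclotomic if this monic integer polynomial has all its complex roots in the closed unit disc. *)

theory Defs
  imports "HOL-Computational_Algebra.Computational_Algebra" "HOL-Analysis.Analysis"
begin

definition numerical_semigroup :: "nat set \<Rightarrow> bool" where
  "numerical_semigroup S \<longleftrightarrow> 0 \<in> S \<and> (\<forall>x\<in>S. \<forall>y\<in>S. x + y \<in> S) \<and> finite (UNIV - S)"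

inductive_set monoid_gen :: "nat set \<Rightarrow> nat set" for A :: "nat set" where
  zero: "0 \<in> monoid_gen A"
| gen: "a \<in> A \<Longrightarrow> a \<in> monoid_gen A"
| add: "x \<in> monoid_gen A \<Longrightarrow> y \<in> monoid_gen A \<Longrightarrow> x + y \<in> monoid_gen A"

definition minimal_generating_set :: "nat set \<Rightarrow> nat set" where
  "minimal_generating_set S =
     (THE A. monoid_gen A = S \<and> (\<forall>B. B \<subset> A \<longrightarrow> monoid_gen B \<noteq> S))"

definition embedding_dimension :: "nat set \<Rightarrow> nat" where
  "embedding_dimension S = card (minimal_generating_set S)"

definition frobenius :: "nat set \<Rightarrow> int" where
  "frobenius S = (if S = UNIV then -1 else int (Max (UNIV - S)))"

definition symmetric_sg :: "nat set \<Rightarrow> bool" where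
  "symmetric_sg S \<longleftrightarrow> int ` S \<union> (\<lambda>s. frobenius S - s) ` (int ` S) = (UNIV :: int set)"

definition semigroup_poly :: "nat set \<Rightarrow> int poly" where
  "semigroup_poly S = (THE p. fps_of_poly p = (1 - fps_X) * Abs_fps (\<lambda>n. if n \<in> S then 1 else 0))"

definition cyclotomic_sg :: "nat set \<Rightarrow> bool" where
  "cyclotomic_sg S \<longleftrightarrow>
     (\<forall>z::complex. poly (map_poly of_int (semigroup_poly S)) z = 0 \<longrightarrow> cmod z \<le> 1)"

end

theory Submission
  imports Defs "HOL-Number_Theory.Cong"
begin

(*
  For S other than N with Frobenius number F, the polynomial P_S is monic of degree F + 1 with
  P_S(0) = 1, and S is symmetric exactly when the coefficient sequence of P_S is a palindrome,
  i.e. when P_S is self-reciprocal.  If all roots of P_S lie in the closed unit disc, their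
  product has modulus |P_S(0)| = 1, so they all lie on the unit circle; since P_S has real
  coefficients it is then self-reciprocal.  Conversely, a self-reciprocal polynomial without
  roots in the open unit disc has none outside the closed one.

  For S = <n1, n2, n3> let c_i be the least k > 0 such that k n_i lies in the semigroup generated
  by the other two generators.  If S is symmetric, some c_i n_i is a multiple of a single other
  generator (Herzog): otherwise F + n1, the largest element of the Apery set of n1, equals
  (c2 - 1) n2 + (c3 - 1) n3, and writing c1 n1 = y n2 + z n3 with y < c2, z < c3 shows that
  F = F + n1 - n1 lies in S.  So S is a gluing: with g = gcd n2 n3 the Apery set of n3 is
  {k n1 + j n2 | k < g, j < n3 / g}, whence
    P_S(x) (1 - x^n3) = (1 - x) (sum_(k<g) x^(k n1)) (sum_(j<n3/g) x^(j n2)),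
  and the right-hand side has no zero in the open unit disc.
*)

section \<open>Numerical semigroups and their polynomial\<close>

lemma numerical_semigroup_zero: "numerical_semigroup S \<Longrightarrow> 0 \<in> S"
  by (simp add: numerical_semigroup_def)

lemma numerical_semigroup_add: "numerical_semigroup S \<Longrightarrow> x \<in> S \<Longrightarrow> y \<in> S \<Longrightarrow> x + y \<in> S"
  by (simp add: numerical_semigroup_def)

lemma numerical_semigroup_eventually:
  assumes "numerical_semigroup S"
  obtains N where "\<And>n. N \<le> n \<Longrightarrow> n \<in> S"
proof -
  have "finite (UNIV - S)" using assms by (simp add: numerical_semigroup_def)
  then obtain N where "\<forall>x \<in> UNIV - S. x < N" using finite_nat_set_iff_bounded by blast
  then show thesis using that[of N] by (metis DiffI UNIV_I leD)
qed

lemma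
  assumes "numerical_semigroup S" "frobenius S = int F"
  shows frobenius_not_in: "F \<notin> S" and greater_frobenius_in: "F < n \<Longrightarrow> n \<in> S"
proof -
  have fin: "finite (UNIV - S)" and nU: "S \<noteq> UNIV"
    using assms by (auto simp: numerical_semigroup_def frobenius_def)
  then have F: "F = Max (UNIV - S)" using assms(2) by (simp add: frobenius_def)
  show "F \<notin> S" using Max_in[OF fin] nU F by blast
  show "n \<in> S" if "F < n" using Max_ge[OF fin, of n] F that by auto
qed

lemma coeff_semigroup_poly:
  assumes "numerical_semigroup S"
  shows "coeff (semigroup_poly S) n = of_bool (n \<in> S) - of_bool (0 < n \<and> n - 1 \<in> S)"
proof -
  define c :: "nat \<Rightarrow> int" where "c n = of_bool (n \<in> S) - of_bool (0 < n \<and> n - 1 \<in> S)" for n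
  obtain N where N: "\<And>n. N \<le> n \<Longrightarrow> n \<in> S" using numerical_semigroup_eventually[OF assms] by blast
  have "c n = 0" if "n > N" for n using N[of n] N[of "n - 1"] that by (simp add: c_def)
  then have coeff_c: "coeff (Abs_poly c) = c" by (rule coeff_Abs_poly)
  have fps: "fps_of_poly (Abs_poly c) = (1 - fps_X) * Abs_fps (\<lambda>n. if n \<in> S then 1 else 0)"
    by (rule fps_ext) (simp add: coeff_c c_def algebra_simps)
  have "semigroup_poly S = Abs_poly c"
    unfolding semigroup_poly_def
    by (rule the_equality) (use fps in \<open>auto simp: fps_of_poly_eq_iff[symmetric]\<close>)
  then show ?thesis by (simp add: coeff_c c_def)
qed

definition semigroup_cpoly :: "nat set \<Rightarrow> complex poly" where
  "semigroup_cpoly S = map_poly of_int (semigroup_poly S)"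

lemma cyclotomic_sg_iff: "cyclotomic_sg S \<longleftrightarrow> (\<forall>z. poly (semigroup_cpoly S) z = 0 \<longrightarrow> cmod z \<le> 1)"
  by (simp add: cyclotomic_sg_def semigroup_cpoly_def)

lemma coeff_semigroup_cpoly:
  assumes "numerical_semigroup S"
  shows "coeff (semigroup_cpoly S) n = of_bool (n \<in> S) - of_bool (0 < n \<and> n - 1 \<in> S)"
  using coeff_semigroup_poly[OF assms, of n] by (simp add: semigroup_cpoly_def coeff_map_poly)

lemma real_coeff_semigroup_cpoly: "coeff (semigroup_cpoly S) n \<in> \<real>"
  by (simp add: semigroup_cpoly_def coeff_map_poly)

lemma poly_semigroup_cpoly_0: "numerical_semigroup S \<Longrightarrow> poly (semigroup_cpoly S) 0 = 1"
  by (simp add: poly_0_coeff_0 coeff_semigroup_cpoly numerical_semigroup_zero)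

lemma
  assumes "numerical_semigroup S" "frobenius S = int F"
  shows degree_semigroup_cpoly: "degree (semigroup_cpoly S) = F + 1"
    and lead_coeff_semigroup_cpoly: "lead_coeff (semigroup_cpoly S) = 1"
proof -
  note coeff = coeff_semigroup_cpoly[OF assms(1)]
  have top: "coeff (semigroup_cpoly S) (F + 1) = 1"
    using coeff frobenius_not_in[OF assms] greater_frobenius_in[OF assms, of "F + 1"] by simp
  have "coeff (semigroup_cpoly S) n = 0" if "F + 1 < n" for n
    using coeff greater_frobenius_in[OF assms, of n] greater_frobenius_in[OF assms, of "n - 1"] that
    by simp
  then have "degree (semigroup_cpoly S) \<le> F + 1" by (intro degree_le) auto
  moreover have "F + 1 \<le> degree (semigroup_cpoly S)" using top by (simp add: le_degree)
  ultimately show "degree (semigroup_cpoly S) = F + 1" by simp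
  then show "lead_coeff (semigroup_cpoly S) = 1" using top by simp
qed

lemma symmetric_sg_iff:
  assumes "numerical_semigroup S" "frobenius S = int F"
  shows "symmetric_sg S \<longleftrightarrow> (\<forall>m \<le> F. m \<in> S \<longleftrightarrow> F - m \<notin> S)"
proof
  assume "symmetric_sg S"
  then have sym: "int ` S \<union> (\<lambda>s. int F - s) ` int ` S = UNIV"
    using assms(2) by (simp add: symmetric_sg_def)
  show "\<forall>m \<le> F. m \<in> S \<longleftrightarrow> F - m \<notin> S"
  proof (intro allI impI)
    fix m assume "m \<le> F"
    have "int m \<in> int ` S \<union> (\<lambda>s. int F - s) ` int ` S" using sym by simp
    then obtain s where s: "s \<in> S" "int m = int s \<or> int m = int F - int s" by auto
    from s(2) \<open>m \<le> F\<close> have "s = m \<or> s = F - m" by arith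
    then have "m \<in> S \<or> F - m \<in> S" using s(1) by auto
    moreover have "\<not> (m \<in> S \<and> F - m \<in> S)"
      using numerical_semigroup_add[OF assms(1), of m "F - m"] frobenius_not_in[OF assms] \<open>m \<le> F\<close>
      by auto
    ultimately show "m \<in> S \<longleftrightarrow> F - m \<notin> S" by blast
  qed
next
  assume compl: "\<forall>m \<le> F. m \<in> S \<longleftrightarrow> F - m \<notin> S"
  have "x \<in> int ` S \<union> (\<lambda>s. int F - s) ` int ` S" for x :: int
  proof (cases "0 \<le> x \<and> nat x \<in> S")
    case True
    then show ?thesis by (intro UnI1 image_eqI[of _ int "nat x"]) auto
  next
    case False
    have "x \<le> int F \<and> nat (int F - x) \<in> S"
    proof (cases "x < 0")
      case True
      then show ?thesis using greater_frobenius_in[OF assms, of "nat (int F - x)"] by simp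
    next
      case nonneg: False
      then have "nat x \<notin> S" using False by simp
      then have "nat x \<le> F" using greater_frobenius_in[OF assms, of "nat x"] by (meson not_le)
      then have "F - nat x \<in> S" using compl \<open>nat x \<notin> S\<close> by blast
      then show ?thesis using \<open>nat x \<le> F\<close> nonneg by (simp add: nat_diff_distrib)
    qed
    then have "int F - x \<in> int ` S" by (intro image_eqI[of _ int "nat (int F - x)"]) auto
    then show ?thesis by (intro UnI2 image_eqI[of _ "\<lambda>s. int F - s" "int F - x"]) auto
  qed
  then have "int ` S \<union> (\<lambda>s. int F - s) ` int ` S = UNIV" by blast
  then show "symmetric_sg S" using assms(2) by (simp add: symmetric_sg_def)
qed

lemma all_eq_pred_iff_constant:
  "(\<forall>n \<in> {1..N}. f n = f (n - 1)) \<longleftrightarrow> (\<forall>n \<le> N. f n = f (0::nat))"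
proof
  assume step: "\<forall>n \<in> {1..N}. f n = f (n - 1)"
  show "\<forall>n \<le> N. f n = f 0"
  proof (intro allI impI)
    fix n assume "n \<le> N"
    then show "f n = f 0"
    proof (induction n)
      case (Suc n)
      then show ?case using step[rule_format, of "Suc n"] by simp
    qed simp
  qed
next
  assume const: "\<forall>n \<le> N. f n = f 0"
  show "\<forall>n \<in> {1..N}. f n = f (n - 1)"
  proof
    fix n assume "n \<in> {1..N}"
    then have "n \<le> N" "n - 1 \<le> N" by auto
    then show "f n = f (n - 1)" using const by metis
  qed
qed

lemma reflect_semigroup_cpoly_iff:
  assumes "numerical_semigroup S" "frobenius S = int F"
  shows "reflect_poly (semigroup_cpoly S) = semigroup_cpoly S \<longleftrightarrow> (\<forall>m \<le> F. m \<in> S \<longleftrightarrow> F - m \<notin> S)"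
proof -
  define P where "P = semigroup_cpoly S"
  define a :: "nat \<Rightarrow> int" where "a m = of_bool (m \<in> S) + of_bool (F - m \<in> S)" for m
  note coeff = coeff_semigroup_cpoly[OF assms(1), folded P_def]
  have deg: "degree P = F + 1" unfolding P_def by (rule degree_semigroup_cpoly[OF assms])
  have ends: "coeff P (F + 1) = coeff P 0"
    using frobenius_not_in[OF assms] greater_frobenius_in[OF assms, of "F + 1"]
      numerical_semigroup_zero[OF assms(1)] by (simp add: coeff)
  \<comment> \<open>the palindrome condition at \<open>n\<close> is the step \<open>a n = a (n - 1)\<close>\<close>
  have middle: "coeff P (F + 1 - n) - coeff P n = of_int (a (n - 1) - a n)" if "n \<in> {1..F}" for n
  proof -
    have "F - (n - 1) = F + 1 - n" "F + 1 - n - 1 = F - n" using that by auto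
    then show ?thesis using that by (simp add: coeff a_def)
  qed
  have "reflect_poly P = P \<longleftrightarrow> (\<forall>n \<le> F + 1. coeff P (F + 1 - n) = coeff P n)"
    using coeff_eq_0[of P] by (auto simp: poly_eq_iff coeff_reflect_poly deg)
  also have "\<dots> \<longleftrightarrow> (\<forall>n \<in> {1..F}. a n = a (n - 1))"
  proof (intro iffI ballI allI impI)
    fix n assume pal: "\<forall>n \<le> F + 1. coeff P (F + 1 - n) = coeff P n" and n: "n \<in> {1..F}"
    then have "coeff P (F + 1 - n) = coeff P n" by auto
    then show "a n = a (n - 1)" using middle[OF n] by simp
  next
    fix n assume a: "\<forall>n \<in> {1..F}. a n = a (n - 1)" and "n \<le> F + 1"
    then consider "n = 0" | "n = F + 1" | "n \<in> {1..F}" by fastforce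
    then show "coeff P (F + 1 - n) = coeff P n"
    proof cases
      case 3
      then have "a n = a (n - 1)" using a by blast
      then show ?thesis using middle[OF 3] by simp
    qed (use ends in auto)
  qed
  also have "\<dots> \<longleftrightarrow> (\<forall>m \<le> F. a m = a 0)" by (rule all_eq_pred_iff_constant)
  also have "\<dots> \<longleftrightarrow> (\<forall>m \<le> F. m \<in> S \<longleftrightarrow> F - m \<notin> S)"
    using frobenius_not_in[OF assms] numerical_semigroup_zero[OF assms(1)] by (auto simp: a_def)
  finally show ?thesis unfolding P_def .
qed

lemma symmetric_sg_iff_reflect_poly:
  assumes "numerical_semigroup S" "frobenius S = int F"
  shows "symmetric_sg S \<longleftrightarrow> reflect_poly (semigroup_cpoly S) = semigroup_cpoly S"
  using symmetric_sg_iff[OF assms] reflect_semigroup_cpoly_iff[OF assms] by simp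

section \<open>Self-reciprocal complex polynomials\<close>

lemma reflect_poly_eq_if_roots_in_unit_disc:
  fixes p :: "complex poly"
  assumes real: "\<And>n. coeff p n \<in> \<real>" and monic: "lead_coeff p = 1" and p0: "poly p 0 = 1"
    and roots: "\<And>z. poly p z = 0 \<Longrightarrow> cmod z \<le> 1"
  shows "reflect_poly p = p"
proof -
  define D where "D = degree p"
  obtain r where "smult (lead_coeff p) (\<Prod>i<degree p. [:- r i, 1:]) = p"
    using complex_poly_decompose' by blast
  then have p_eq: "p = (\<Prod>i<D. [:- r i, 1:])" using monic by (simp add: D_def)
  have p: "poly p x = (\<Prod>i<D. x - r i)" for x
    by (subst p_eq) (simp add: poly_prod)
  have r_le: "cmod (r i) \<le> 1" if "i < D" for i
    using roots[of "r i"] that by (auto simp: p prod_zero_iff)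
  have prod_r: "(\<Prod>i<D. - r i) = 1" using p[of 0] p0 by simp
  have r_unit: "r i * cnj (r i) = 1" if "i < D" for i
  proof -
    have "cmod (r i) = 1"
    proof (rule ccontr)
      assume "cmod (r i) \<noteq> 1"
      then have "(\<Prod>j<D. cmod (r j)) < (\<Prod>j<D. 1)"
        using that r_le[of i] by (intro prod_mono_strict[of i]) (auto simp: r_le order.strict_iff_order)
      moreover have "(\<Prod>j<D. cmod (r j)) = 1"
        using arg_cong[OF prod_r, of cmod] by (simp add: prod_norm[symmetric])
      ultimately show False by simp
    qed
    then show ?thesis by (simp add: complex_norm_square[symmetric])
  qed
  have "poly (reflect_poly p) x = poly p x" for x
  proof (cases "x = 0")
    case True
    then show ?thesis using p0 monic by simp
  next
    case False
    have factor: "x * (inverse x - r i) = - r i * (x - cnj (r i))" if "i < D" for i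
      using r_unit[OF that] False by (simp add: algebra_simps)
    have "poly (reflect_poly p) x = (\<Prod>i<D. x * (inverse x - r i))"
      using False by (simp add: poly_reflect_poly_nz p D_def prod.distrib)
    also have "\<dots> = (\<Prod>i<D. - r i * (x - cnj (r i)))" using factor by (intro prod.cong) auto
    also have "\<dots> = (\<Prod>i<D. - r i) * (\<Prod>i<D. x - cnj (r i))" by (rule prod.distrib)
    also have "\<dots> = cnj (poly p (cnj x))" by (simp add: prod_r p)
    also have "\<dots> = poly p x" using poly_cnj_real[OF real] by simp
    finally show ?thesis .
  qed
  then show ?thesis using poly_eq_poly_eq_iff by blast
qed

lemma roots_in_unit_disc_if_reflect_poly_eq:
  fixes p :: "complex poly"
  assumes "reflect_poly p = p" and no_roots: "\<And>w. cmod w < 1 \<Longrightarrow> poly p w \<noteq> 0"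
    and "poly p z = 0"
  shows "cmod z \<le> 1"
proof (rule ccontr)
  assume "\<not> cmod z \<le> 1"
  then have "z \<noteq> 0" "cmod (inverse z) < 1" by (auto simp: norm_inverse inverse_less_1_iff)
  have "poly p (inverse z) = inverse z ^ degree p * poly p z"
    using assms(1) poly_reflect_poly_nz[of "inverse z" p] \<open>z \<noteq> 0\<close> by simp
  then show False using no_roots[OF \<open>cmod (inverse z) < 1\<close>] \<open>poly p z = 0\<close> by simp
qed

section \<open>Minimal generating sets\<close>

lemma monoid_gen_subset:
  assumes "A \<subseteq> S" "0 \<in> S" "\<And>x y. x \<in> S \<Longrightarrow> y \<in> S \<Longrightarrow> x + y \<in> S"
  shows "monoid_gen A \<subseteq> S"
proof
  fix x assume "x \<in> monoid_gen A"
  then show "x \<in> S" by induction (use assms in auto)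
qed

lemma monoid_gen_mono: "A \<subseteq> monoid_gen B \<Longrightarrow> monoid_gen A \<subseteq> monoid_gen B"
  by (rule monoid_gen_subset) (auto intro: monoid_gen.intros)

lemma monoid_gen_empty: "monoid_gen {} = {0}"
  using monoid_gen_subset[of "{}" "{0}"] by (auto intro: monoid_gen.zero)

lemma mult_in_monoid_gen: "a \<in> A \<Longrightarrow> a * k \<in> monoid_gen A"
  by (induction k) (auto intro: monoid_gen.intros)

lemma monoid_gen_insert: "monoid_gen (insert a B) = {a * k + m | k m. m \<in> monoid_gen B}"
proof
  show "monoid_gen (insert a B) \<subseteq> {a * k + m | k m. m \<in> monoid_gen B}"
  proof (rule monoid_gen_subset)
    show "insert a B \<subseteq> {a * k + m | k m. m \<in> monoid_gen B}"
      by (force intro: monoid_gen.intros)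
    show "0 \<in> {a * k + m | k m. m \<in> monoid_gen B}"
      by (force intro: monoid_gen.intros)
    show "x + y \<in> {a * k + m | k m. m \<in> monoid_gen B}"
      if "x \<in> {a * k + m | k m. m \<in> monoid_gen B}" "y \<in> {a * k + m | k m. m \<in> monoid_gen B}" for x y
    proof -
      from that obtain k m k' m' where "x = a * k + m" "y = a * k' + m'"
        and "m \<in> monoid_gen B" "m' \<in> monoid_gen B" by blast
      then have "x + y = a * (k + k') + (m + m')" "m + m' \<in> monoid_gen B"
        by (auto simp: algebra_simps intro: monoid_gen.add)
      then show ?thesis by blast
    qed
  qed
  have "monoid_gen B \<subseteq> monoid_gen (insert a B)" by (rule monoid_gen_mono) (auto intro: monoid_gen.gen)
  then show "{a * k + m | k m. m \<in> monoid_gen B} \<subseteq> monoid_gen (insert a B)"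
    by (auto intro!: monoid_gen.add mult_in_monoid_gen)
qed

lemma in_monoid_gen_pair: "n \<in> monoid_gen {a, b} \<longleftrightarrow> (\<exists>x y. n = a * x + b * y)"
  by (auto simp: monoid_gen_insert monoid_gen_empty)

lemma in_monoid_gen_triple: "n \<in> monoid_gen {a, b, c} \<longleftrightarrow> (\<exists>x y z. n = a * x + b * y + c * z)"
proof
  assume "n \<in> monoid_gen {a, b, c}"
  then show "\<exists>x y z. n = a * x + b * y + c * z"
    by (auto simp: monoid_gen_insert[of a] in_monoid_gen_pair add.assoc)
qed (auto intro!: monoid_gen.add mult_in_monoid_gen)

lemma Gcd_dvd_monoid_gen: "x \<in> monoid_gen A \<Longrightarrow> Gcd A dvd x"
  for A :: "nat set"
  by (induction rule: monoid_gen.induct) auto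

definition atoms :: "nat set \<Rightarrow> nat set" where
  "atoms S = {x \<in> S. x \<noteq> 0 \<and> (\<forall>y \<in> S. \<forall>z \<in> S. x = y + z \<longrightarrow> y = 0 \<or> z = 0)}"

lemma atom_in_generators:
  assumes "x \<in> monoid_gen B" "monoid_gen B \<subseteq> S" "x \<in> atoms S"
  shows "x \<in> B"
  using assms
proof (induction rule: monoid_gen.induct)
  case (add y z)
  then have "y \<in> S" "z \<in> S" by auto
  then have "y = 0 \<or> z = 0" using add.prems(2) by (auto simp: atoms_def)
  then show ?case using add by auto
qed (auto simp: atoms_def)

lemma monoid_gen_atoms:
  assumes "numerical_semigroup S"
  shows "monoid_gen (atoms S) = S"
proof
  show "monoid_gen (atoms S) \<subseteq> S"
  proof (rule monoid_gen_subset)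
    show "atoms S \<subseteq> S" by (auto simp: atoms_def)
  qed (use numerical_semigroup_zero[OF assms] numerical_semigroup_add[OF assms] in blast)+
  show "S \<subseteq> monoid_gen (atoms S)"
  proof
    fix s assume "s \<in> S"
    then show "s \<in> monoid_gen (atoms S)"
    proof (induction s rule: less_induct)
      case (less s)
      show ?case
      proof (cases "s = 0 \<or> s \<in> atoms S")
        case True
        then show ?thesis by (auto intro: monoid_gen.intros)
      next
        case False
        with less.prems obtain y z where "y \<in> S" "z \<in> S" "y \<noteq> 0" "z \<noteq> 0" "s = y + z"
          unfolding atoms_def by blast
        then have "y \<in> monoid_gen (atoms S)" "z \<in> monoid_gen (atoms S)" using less.IH by auto
        then show ?thesis using \<open>s = y + z\<close> by (simp add: monoid_gen.add)
      qed
    qed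
  qed
qed

lemma monoid_gen_remove_greater:
  "x \<in> monoid_gen A \<Longrightarrow> x < a \<Longrightarrow> x \<in> monoid_gen (A - {a})"
  by (induction rule: monoid_gen.induct) (auto intro: monoid_gen.intros)

lemma minimal_generating_set_eq_atoms:
  assumes "numerical_semigroup S"
  shows "minimal_generating_set S = atoms S"
  unfolding minimal_generating_set_def
proof (rule the_equality)
  show "monoid_gen (atoms S) = S \<and> (\<forall>B. B \<subset> atoms S \<longrightarrow> monoid_gen B \<noteq> S)"
  proof (intro conjI allI impI notI)
    show "monoid_gen (atoms S) = S" by (rule monoid_gen_atoms[OF assms])
    fix B assume "B \<subset> atoms S" "monoid_gen B = S"
    then obtain x where x: "x \<in> atoms S" "x \<notin> B" by blast
    then have "x \<in> monoid_gen B" using \<open>monoid_gen B = S\<close> by (simp add: atoms_def)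
    then show False using atom_in_generators[of x B S] x \<open>monoid_gen B = S\<close> by simp
  qed
next
  fix A assume A: "monoid_gen A = S \<and> (\<forall>B. B \<subset> A \<longrightarrow> monoid_gen B \<noteq> S)"
  have "x \<in> A" if x: "x \<in> atoms S" for x
  proof -
    have "x \<in> monoid_gen A" using A x by (simp add: atoms_def)
    then show ?thesis using atom_in_generators[of x A S] A x by simp
  qed
  moreover have "a \<in> atoms S" if "a \<in> A" for a
  proof (rule ccontr)
    assume "a \<notin> atoms S"
    have "a \<in> S" using A that monoid_gen.gen[of a A] by simp
    have "a \<in> monoid_gen (A - {a})"
    proof (cases "a = 0")
      case False
      with \<open>a \<notin> atoms S\<close> \<open>a \<in> S\<close> obtain y z where yz: "y \<in> S" "z \<in> S" "y \<noteq> 0" "z \<noteq> 0" "a = y + z"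
        unfolding atoms_def by blast
      then have "y \<in> monoid_gen (A - {a})" "z \<in> monoid_gen (A - {a})"
        using A monoid_gen_remove_greater[of _ A a] by auto
      then show ?thesis using \<open>a = y + z\<close> by (simp add: monoid_gen.add)
    qed (simp add: monoid_gen.zero)
    then have "monoid_gen A \<subseteq> monoid_gen (A - {a})"
      by (intro monoid_gen_mono) (auto intro: monoid_gen.gen)
    moreover have "monoid_gen (A - {a}) \<subseteq> monoid_gen A"
      by (intro monoid_gen_mono) (auto intro: monoid_gen.gen)
    moreover have "A - {a} \<subset> A" using that by blast
    ultimately show False using A by blast
  qed
  ultimately show "A = atoms S" by blast
qed

lemma finite_atoms:
  assumes "numerical_semigroup S"
  shows "finite (atoms S)"
proof -
  obtain N where N: "\<And>n. N \<le> n \<Longrightarrow> n \<in> S"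
    using numerical_semigroup_eventually[OF assms] by blast
  have "x < 2 * N + 2" if "x \<in> atoms S" for x
  proof (rule ccontr)
    assume "\<not> x < 2 * N + 2"
    then have "N + 1 \<in> S" "x - (N + 1) \<in> S" "x = (N + 1) + (x - (N + 1))" "x - (N + 1) \<noteq> 0"
      using N by auto
    moreover have "\<forall>y \<in> S. \<forall>z \<in> S. x = y + z \<longrightarrow> y = 0 \<or> z = 0"
      using that by (simp add: atoms_def)
    ultimately show False by (metis add_is_0 zero_neq_one)
  qed
  then show ?thesis by (meson finite_nat_set_iff_bounded)
qed

lemma finite_card_le_3_cases:
  assumes "finite A" "A \<noteq> {}" "card A \<le> 3"
  obtains a b c where "A = {a, b, c}"
proof -
  have "card A \<noteq> 0" using assms by simp
  then have "card A = 1 \<or> card A = 2 \<or> card A = 3" using assms(3) by linarith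
  then show thesis
  proof (elim disjE)
    assume "card A = 1"
    then obtain x where "A = {x}" by (auto simp: card_1_singleton_iff)
    then show thesis using that[of x x x] by simp
  next
    assume "card A = 2"
    then obtain x y where "A = {x, y}" by (auto simp: card_2_iff)
    then show thesis using that[of x y y] by simp
  next
    assume "card A = 3"
    then show thesis using that by (auto simp: card_3_iff)
  qed
qed

lemma three_generators:
  assumes "numerical_semigroup S" "embedding_dimension S \<le> 3"
  obtains a b c where "0 < a" "0 < b" "0 < c" "S = monoid_gen {a, b, c}" "Gcd {a, b, c} = 1"
proof -
  obtain N where N: "\<And>n. N \<le> n \<Longrightarrow> n \<in> S"
    using numerical_semigroup_eventually[OF assms(1)] by blast
  have "atoms S \<noteq> {}"
    using monoid_gen_atoms[OF assms(1)] N[of "N + 1"] by (auto simp: monoid_gen_empty)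
  moreover have "card (atoms S) \<le> 3"
    using assms by (simp add: embedding_dimension_def minimal_generating_set_eq_atoms)
  ultimately obtain a b c where abc: "atoms S = {a, b, c}"
    using finite_atoms[OF assms(1)] finite_card_le_3_cases by metis
  then have S: "S = monoid_gen {a, b, c}" using monoid_gen_atoms[OF assms(1)] by simp
  have "Gcd {a, b, c} dvd n" if "N \<le> n" for n
    using Gcd_dvd_monoid_gen[of n "{a, b, c}"] N[OF that] S by simp
  then have "Gcd {a, b, c} dvd N" "Gcd {a, b, c} dvd N + 1" by auto
  then have "Gcd {a, b, c} dvd 1" by (simp only: dvd_add_right_iff)
  moreover have "0 < a" "0 < b" "0 < c" using abc by (auto simp: atoms_def)
  ultimately show thesis using S by (intro that) auto
qed

section \<open>Apery sets\<close>

definition apery :: "nat set \<Rightarrow> nat \<Rightarrow> nat set" where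
  "apery S n = {w \<in> S. \<not> (n \<le> w \<and> w - n \<in> S)}"

lemma finite_apery:
  assumes "numerical_semigroup S"
  shows "finite (apery S n)"
proof -
  obtain N where N: "\<And>k. N \<le> k \<Longrightarrow> k \<in> S"
    using numerical_semigroup_eventually[OF assms] by blast
  have "w < N + n" if "w \<in> apery S n" for w
  proof (rule ccontr)
    assume "\<not> w < N + n"
    then have "n \<le> w" "w - n \<in> S" using N by auto
    then show False using that by (simp add: apery_def)
  qed
  then show ?thesis by (meson finite_nat_set_iff_bounded)
qed

lemma fps_of_poly_semigroup_cpoly:
  assumes "numerical_semigroup S"
  shows "fps_of_poly (semigroup_cpoly S) = (1 - fps_X) * Abs_fps (\<lambda>k. of_bool (k \<in> S))"
  by (rule fps_ext) (simp add: coeff_semigroup_cpoly[OF assms] algebra_simps)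

lemma poly_semigroup_cpoly_apery:
  assumes "numerical_semigroup S" "n \<in> S"
  shows "poly (semigroup_cpoly S) w * (1 - w ^ n) = (1 - w) * (\<Sum>a \<in> apery S n. w ^ a)"
proof -
  define A :: "complex poly" where "A = (\<Sum>a \<in> apery S n. monom 1 a)"
  have coeff_A: "coeff A k = of_bool (k \<in> apery S n)" for k
    using finite_apery[OF assms(1)] by (simp add: A_def coeff_sum coeff_monom)
  have apery_indicator: "of_bool (k \<in> S) - of_bool (n \<le> k \<and> k - n \<in> S) = coeff A k" for k
    using numerical_semigroup_add[OF assms(1), of "k - n" n] assms(2)
    by (auto simp: coeff_A apery_def)
  have "Abs_fps (\<lambda>k. of_bool (k \<in> S)) * (1 - fps_X ^ n) = fps_of_poly A"
    by (rule fps_ext) (simp add: right_diff_distrib fps_X_power_mult_right_nth apery_indicator[symmetric])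
  then have "fps_of_poly (semigroup_cpoly S * (1 - monom 1 n)) = fps_of_poly ((1 - monom 1 1) * A)"
    by (simp add: fps_of_poly_semigroup_cpoly[OF assms(1)] fps_of_poly_mult fps_of_poly_diff
        fps_of_poly_monom' mult.assoc)
  then have "semigroup_cpoly S * (1 - monom 1 n) = (1 - monom 1 1) * A"
    by (simp only: fps_of_poly_eq_iff)
  from arg_cong[OF this, of "\<lambda>p. poly p w"] show ?thesis
    by (simp add: A_def poly_sum poly_monom)
qed

lemma symmetric_apery_max:
  assumes "numerical_semigroup S" "frobenius S = int F" "symmetric_sg S" "0 < n"
  shows "F + n \<in> apery S n"
    and "w \<in> apery S n \<Longrightarrow> w \<le> F + n \<and> F + n - w \<in> S"
proof -
  have compl: "\<forall>m \<le> F. m \<in> S \<longleftrightarrow> F - m \<notin> S"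
    using assms(3) symmetric_sg_iff[OF assms(1,2)] by blast
  show "F + n \<in> apery S n"
    using assms(4) frobenius_not_in[OF assms(1,2)] greater_frobenius_in[OF assms(1,2), of "F + n"]
    by (simp add: apery_def)
  assume w: "w \<in> apery S n"
  have "w \<le> F + n"
  proof (rule ccontr)
    assume "\<not> w \<le> F + n"
    then have "n \<le> w" "w - n \<in> S" using greater_frobenius_in[OF assms(1,2), of "w - n"] by auto
    then show False using w by (simp add: apery_def)
  qed
  moreover have "F + n - w \<in> S"
  proof (cases "n \<le> w")
    case True
    then have "w - n \<notin> S" "w - n \<le> F" using w \<open>w \<le> F + n\<close> by (auto simp: apery_def)
    then have "F - (w - n) \<in> S" using compl by blast
    moreover have "F - (w - n) = F + n - w" using True \<open>w \<le> F + n\<close> by simp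
    ultimately show ?thesis by simp
  next
    case False
    then show ?thesis using greater_frobenius_in[OF assms(1,2), of "F + n - w"] by simp
  qed
  ultimately show "w \<le> F + n \<and> F + n - w \<in> S" ..
qed

section \<open>Gluings\<close>

(* Herzog's c_i, for a = n_i and B the set of the other two generators *)
definition least_mult_in :: "nat \<Rightarrow> nat set \<Rightarrow> nat" where
  "least_mult_in a B = (LEAST k. 0 < k \<and> k * a \<in> monoid_gen B)"

lemma
  assumes "b \<in> B" "0 < b"
  shows least_mult_in_pos: "0 < least_mult_in a B"
    and least_mult_in_mem: "least_mult_in a B * a \<in> monoid_gen B"
proof -
  have "0 < b \<and> b * a \<in> monoid_gen B" using assms mult_in_monoid_gen[of b B a] by simp
  then have "0 < least_mult_in a B \<and> least_mult_in a B * a \<in> monoid_gen B"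
    unfolding least_mult_in_def by (rule LeastI)
  then show "0 < least_mult_in a B" "least_mult_in a B * a \<in> monoid_gen B" by auto
qed

lemma less_least_mult_in_not_mem:
  "0 < k \<Longrightarrow> k < least_mult_in a B \<Longrightarrow> k * a \<notin> monoid_gen B"
  unfolding least_mult_in_def using not_less_Least by blast

lemma not_in_monoid_gen_pair:
  fixes m1 m2 x :: nat
  assumes "coprime m1 m2" "0 < m2" "x \<notin> monoid_gen {m1, m2}"
  obtains a b where "x + m1 * Suc a + m2 * Suc b = m1 * m2"
proof -
  have "gcd m1 m2 dvd x" using assms(1) by simp
  then obtain \<alpha> where \<alpha>: "[m1 * \<alpha> = x] (mod m2)" using cong_solve_dvd_nat by blast
  define r where "r = \<alpha> mod m2"
  have "[m1 * r = m1 * \<alpha>] (mod m2)" unfolding r_def by (intro cong_scalar_left) (simp add: cong_def)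
  then have r: "[m1 * r = x] (mod m2)" using \<alpha> by (rule cong_trans)
  have "r < m2" using assms(2) by (simp add: r_def)
  then obtain a where a: "m2 = r + Suc a" using less_imp_Suc_add by auto
  show thesis
  proof (cases "m1 * r \<le> x")
    case True
    have "[x = m1 * r] (mod m2)" using r by (rule cong_sym)
    then obtain q where "x = m1 * r + m2 * q" using cong_le_nat[OF True] by (auto simp: ac_simps)
    then have "x \<in> monoid_gen {m1, m2}" unfolding in_monoid_gen_pair by blast
    then show thesis using assms(3) by blast
  next
    case False
    then obtain q where q: "m1 * r = q * m2 + x"
      using cong_le_nat[of x "m1 * r"] r by auto
    have "q \<noteq> 0" using q False by auto
    then obtain b where "q = Suc b" using not0_implies_Suc by blast
    then have "x + m1 * Suc a + m2 * Suc b = m1 * m2" using q a by (simp add: algebra_simps)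
    then show thesis by (rule that)
  qed
qed

lemma glued_decomposition:
  fixes n1 n2 n3 :: nat
  assumes "0 < n1" "0 < n2" "0 < n3" "Gcd {n1, n2, n3} = 1"
    and glued: "n3 dvd least_mult_in n2 {n1, n3} * n2"
  obtains g m1 m2 p q where "n2 = g * m1" "n3 = g * m2" "0 < g" "0 < m2"
    "coprime m1 m2" "coprime n1 g" "n1 = m1 * p + m2 * q"
proof -
  define g where "g = gcd n2 n3"
  have "0 < g" using assms(3) by (simp add: g_def)
  obtain m1 m2 where n2: "n2 = g * m1" and n3: "n3 = g * m2"
    unfolding g_def by (meson dvdE gcd_dvd1 gcd_dvd2)
  have div: "n2 div g = m1" "n3 div g = m2" using \<open>0 < g\<close> by (simp_all add: n2 n3)
  have "0 < m1" "0 < m2" using assms(2,3) n2 n3 by simp_all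
  have "coprime (n2 div g) (n3 div g)" unfolding g_def using assms(3) by (intro div_gcd_coprime) simp
  then have "coprime m1 m2" by (simp only: div)
  have "coprime n1 g" using assms(4) by (simp add: g_def coprime_iff_gcd_eq_1)
  define c where "c = least_mult_in n2 {n1, n3}"
  have "0 < c" using least_mult_in_pos[of n1 "{n1, n3}"] assms(1) by (simp add: c_def)
  obtain l where "c * n2 = n3 * l" using glued by (auto simp: c_def)
  then have "m2 dvd c * m1" using \<open>0 < g\<close> by (simp add: n2 n3 mult.left_commute)
  then have "m2 dvd c" using \<open>coprime m1 m2\<close> by (simp add: coprime_commute coprime_dvd_mult_left_iff)
  then have "m2 \<le> c" using \<open>0 < c\<close> by (simp add: dvd_imp_le)
  have "n1 \<in> monoid_gen {m1, m2}"
  proof (rule ccontr)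
    assume "n1 \<notin> monoid_gen {m1, m2}"
    with \<open>coprime m1 m2\<close> \<open>0 < m2\<close> obtain a b where ab: "n1 + m1 * Suc a + m2 * Suc b = m1 * m2"
      by (rule not_in_monoid_gen_pair)
    then have "m1 * Suc a \<le> m1 * m2" by linarith
    then have "Suc a \<le> m2" using \<open>0 < m1\<close> nat_mult_le_cancel1 by blast
    define k where "k = m2 - Suc a"
    then have k: "m2 = Suc a + k" using \<open>Suc a \<le> m2\<close> by simp
    have "g * (n1 + m1 * Suc a + m2 * Suc b) = g * (m1 * m2)" using ab by simp
    then have rel: "k * n2 = n1 * g + n3 * Suc b" by (simp add: n2 n3 k algebra_simps)
    then have "k * n2 \<in> monoid_gen {n1, n3}" unfolding in_monoid_gen_pair by blast
    moreover have "0 < k" using rel \<open>0 < g\<close> assms(1) by (cases k) auto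
    moreover have "k < c" using k \<open>m2 \<le> c\<close> by simp
    ultimately show False using less_least_mult_in_not_mem c_def by blast
  qed
  then obtain p q where "n1 = m1 * p + m2 * q" by (auto simp: in_monoid_gen_pair)
  then show thesis by (rule that[OF n2 n3 \<open>0 < g\<close> \<open>0 < m2\<close> \<open>coprime m1 m2\<close> \<open>coprime n1 g\<close>])
qed

lemma gluing_repr_exists:
  fixes n1 n2 n3 g m1 m2 p q x y z :: nat
  assumes n2: "n2 = g * m1" and n3: "n3 = g * m2" and "0 < g" "0 < m2"
    and n1: "n1 = m1 * p + m2 * q"
  obtains k j i where "k < g" "j < m2" "n1 * x + n2 * y + n3 * z = n1 * k + n2 * j + n3 * i"
proof -
  define k X where "k = x mod g" and "X = x div g"
  define j Y where "j = (y + p * X) mod m2" and "Y = (y + p * X) div m2"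
  have x: "x = k + g * X" and y: "y + p * X = j + m2 * Y" by (simp_all add: k_def X_def j_def Y_def)
  have "n1 * x + n2 * y + n3 * z = n1 * k + n2 * (y + p * X) + n3 * (z + q * X)"
    unfolding x n1 n2 n3 by (simp add: algebra_simps)
  also have "\<dots> = n1 * k + n2 * j + n3 * (z + q * X + m1 * Y)"
    unfolding y n2 n3 by (simp add: algebra_simps)
  finally show thesis using \<open>0 < g\<close> \<open>0 < m2\<close> by (intro that) (simp_all add: k_def j_def)
qed

lemma gluing_repr_unique:
  fixes n1 n2 n3 g m1 m2 :: nat
  assumes n2: "n2 = g * m1" and n3: "n3 = g * m2" and "0 < g"
    and "coprime m1 m2" "coprime n1 g"
    and "k < g" "k' < g" "j < m2" "j' < m2"
    and eq: "n1 * k + n2 * j + n3 * i = n1 * k' + n2 * j' + n3 * i'"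
  shows "k = k' \<and> j = j' \<and> i = i'"
proof -
  have eq_g: "n1 * k + g * (m1 * j + m2 * i) = n1 * k' + g * (m1 * j' + m2 * i')"
    using eq unfolding n2 n3 by (simp add: algebra_simps)
  then have "[n1 * k = n1 * k'] (mod g)" by (metis cong_add_rcancel_0_nat cong_mult_self_right cong_def mod_mult_self2 mult.commute)
  then have "[k = k'] (mod g)" using \<open>coprime n1 g\<close> by (simp add: cong_mult_lcancel_nat)
  then have "k = k'" using \<open>k < g\<close> \<open>k' < g\<close> by (simp add: cong_less_modulus_unique_nat)
  then have eq_m: "m1 * j + m2 * i = m1 * j' + m2 * i'" using eq_g \<open>0 < g\<close> by simp
  then have "[m1 * j = m1 * j'] (mod m2)" by (metis cong_def mod_mult_self2 mult.commute)
  then have "[j = j'] (mod m2)" using \<open>coprime m1 m2\<close> by (simp add: cong_mult_lcancel_nat)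
  then have "j = j'" using \<open>j < m2\<close> \<open>j' < m2\<close> by (simp add: cong_less_modulus_unique_nat)
  then show ?thesis using \<open>k = k'\<close> eq_m \<open>j < m2\<close> by auto
qed

lemma apery_gluing:
  fixes n1 n2 n3 g m1 m2 p q :: nat
  assumes S: "S = monoid_gen {n1, n2, n3}"
    and n2: "n2 = g * m1" and n3: "n3 = g * m2" and "0 < g" "0 < m2"
    and "coprime m1 m2" "coprime n1 g" and n1: "n1 = m1 * p + m2 * q"
  shows "apery S n3 = (\<lambda>(k, j). n1 * k + n2 * j) ` ({..<g} \<times> {..<m2})"
proof -
  note exists = gluing_repr_exists[OF n2 n3 \<open>0 < g\<close> \<open>0 < m2\<close> n1]
  note unique = gluing_repr_unique[OF n2 n3 \<open>0 < g\<close> \<open>coprime m1 m2\<close> \<open>coprime n1 g\<close>]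
  show ?thesis
  proof (intro set_eqI iffI)
    fix w
    assume "w \<in> apery S n3"
    then have "w \<in> S" and not_shift: "\<not> (n3 \<le> w \<and> w - n3 \<in> S)" by (auto simp: apery_def)
    then obtain x y z where xyz: "w = n1 * x + n2 * y + n3 * z" by (auto simp: S in_monoid_gen_triple)
    obtain k j i where kji: "k < g" "j < m2" "n1 * x + n2 * y + n3 * z = n1 * k + n2 * j + n3 * i"
      by (rule exists)
    have "i = 0"
    proof (rule ccontr)
      assume "i \<noteq> 0"
      then have "n3 \<le> w" "w - n3 = n1 * k + n2 * j + n3 * (i - 1)"
        using xyz kji(3) by (cases i; simp)+
      then have "n3 \<le> w \<and> w - n3 \<in> S" unfolding S in_monoid_gen_triple by blast
      then show False using not_shift by blast
    qed
    then show "w \<in> (\<lambda>(k, j). n1 * k + n2 * j) ` ({..<g} \<times> {..<m2})"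
      using xyz kji by (intro image_eqI[of _ _ "(k, j)"]) auto
  next
    fix w
    assume "w \<in> (\<lambda>(k, j). n1 * k + n2 * j) ` ({..<g} \<times> {..<m2})"
    then obtain k j where kj: "k < g" "j < m2" "w = n1 * k + n2 * j + n3 * 0" by auto
    then have "w \<in> S" unfolding S in_monoid_gen_triple by blast
    moreover have "\<not> (n3 \<le> w \<and> w - n3 \<in> S)"
    proof
      assume "n3 \<le> w \<and> w - n3 \<in> S"
      then obtain x y z where xyz: "w - n3 = n1 * x + n2 * y + n3 * z"
        by (auto simp: S in_monoid_gen_triple)
      obtain k' j' i' where kji': "k' < g" "j' < m2" "n1 * x + n2 * y + n3 * z = n1 * k' + n2 * j' + n3 * i'"
        by (rule exists)
      from \<open>n3 \<le> w \<and> w - n3 \<in> S\<close> have "w = (w - n3) + n3" by simp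
      also have "\<dots> = n1 * k' + n2 * j' + n3 * Suc i'" using xyz kji'(3) by simp
      finally have "n1 * k + n2 * j + n3 * 0 = n1 * k' + n2 * j' + n3 * Suc i'" using kj(3) by simp
      from unique[OF kj(1) kji'(1) kj(2) kji'(2) this] show False by simp
    qed
    ultimately show "w \<in> apery S n3" by (simp add: apery_def)
  qed
qed

lemma geometric_sum_nonzero:
  fixes u :: "'a :: real_normed_field"
  assumes "norm u < 1" "0 < K"
  shows "(\<Sum>k<K. u ^ k) \<noteq> 0"
proof -
  have "u \<noteq> 1" using assms(1) by auto
  have "norm (u ^ K) < 1" using assms by (simp add: norm_power power_less_one_iff)
  then have "u ^ K \<noteq> 1" by auto
  then show ?thesis using \<open>u \<noteq> 1\<close> by (simp add: sum_gp_strict)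
qed

lemma poly_semigroup_cpoly_nonzero_glued:
  fixes n1 n2 n3 :: nat
  assumes "numerical_semigroup S" and S: "S = monoid_gen {n1, n2, n3}"
    and "0 < n1" "0 < n2" "0 < n3" "Gcd {n1, n2, n3} = 1"
    and "n3 dvd least_mult_in n2 {n1, n3} * n2" and "cmod w < 1"
  shows "poly (semigroup_cpoly S) w \<noteq> 0"
proof -
  obtain g m1 m2 p q where gl: "n2 = g * m1" "n3 = g * m2" "0 < g" "0 < m2"
      "coprime m1 m2" "coprime n1 g" "n1 = m1 * p + m2 * q"
    by (rule glued_decomposition[OF assms(3-7)])
  define \<phi> where "\<phi> = (\<lambda>(k, j). n1 * k + n2 * j)"
  define D where "D = {..<g} \<times> {..<m2}"
  have "inj_on \<phi> D"
    using gluing_repr_unique[OF gl(1,2,3,5,6), where i = 0 and i' = 0]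
    by (auto simp: inj_on_def \<phi>_def D_def)
  have "(\<Sum>a \<in> apery S n3. w ^ a) = (\<Sum>d \<in> D. w ^ \<phi> d)"
    unfolding apery_gluing[OF S gl] \<phi>_def[symmetric] D_def[symmetric]
    using \<open>inj_on \<phi> D\<close> by (simp add: sum.reindex)
  also have "\<dots> = (\<Sum>k<g. \<Sum>j<m2. (w ^ n1) ^ k * (w ^ n2) ^ j)"
    unfolding D_def \<phi>_def sum.cartesian_product
    by (intro sum.cong refl) (auto simp: power_add power_mult)
  also have "\<dots> = (\<Sum>k<g. (w ^ n1) ^ k) * (\<Sum>j<m2. (w ^ n2) ^ j)"
    by (simp add: sum_product)
  finally have "(\<Sum>a \<in> apery S n3. w ^ a) \<noteq> 0"
    using geometric_sum_nonzero[of "w ^ n1" g] geometric_sum_nonzero[of "w ^ n2" m2]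
      assms(3,4,8) gl(3,4) by (simp add: norm_power power_less_one_iff)
  moreover have "n3 \<in> S" unfolding S by (auto intro: monoid_gen.gen)
  then have "poly (semigroup_cpoly S) w * (1 - w ^ n3) = (1 - w) * (\<Sum>a \<in> apery S n3. w ^ a)"
    by (rule poly_semigroup_cpoly_apery[OF assms(1)])
  moreover have "1 - w \<noteq> 0" using assms(8) by auto
  ultimately show ?thesis by auto
qed

section \<open>Symmetric semigroups with three generators\<close>

lemma mult_in_apery_below_least_mult_in:
  fixes n1 n2 n3 k :: nat
  assumes S: "S = monoid_gen {n1, n2, n3}" and "0 < n1" and "k < least_mult_in n2 {n1, n3}"
  shows "k * n2 \<in> apery S n1"
proof -
  have "k * n2 \<in> S" unfolding S using mult_in_monoid_gen[of n2 "{n1, n2, n3}" k]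
    by (simp add: mult.commute)
  moreover have "\<not> (n1 \<le> k * n2 \<and> k * n2 - n1 \<in> S)"
  proof
    assume shift: "n1 \<le> k * n2 \<and> k * n2 - n1 \<in> S"
    then obtain x y z where xyz: "k * n2 - n1 = n1 * x + n2 * y + n3 * z"
      by (auto simp: S in_monoid_gen_triple)
    from shift have "k * n2 = (k * n2 - n1) + n1" by simp
    also have "\<dots> = n1 * Suc x + n2 * y + n3 * z" using xyz by simp
    finally have rel: "k * n2 = n1 * Suc x + n2 * y + n3 * z" .
    show False
    proof (cases "y < k")
      case True
      define d where "d = k - y"
      then have "k = y + d" "0 < d" "d < least_mult_in n2 {n1, n3}" using True assms(3) by auto
      then have "d * n2 = n1 * Suc x + n3 * z" using rel by (simp add: algebra_simps)
      then have "d * n2 \<in> monoid_gen {n1, n3}" unfolding in_monoid_gen_pair by blast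
      then show False using less_least_mult_in_not_mem \<open>0 < d\<close> \<open>d < least_mult_in n2 {n1, n3}\<close> by blast
    next
      case False
      then have "k * n2 \<le> n2 * y" by (simp add: mult.commute)
      then show False using rel \<open>0 < n1\<close> by simp
    qed
  qed
  ultimately show ?thesis by (simp add: apery_def)
qed

lemma apery_repr_bound:
  fixes n1 n2 n3 x y z :: nat
  assumes S: "S = monoid_gen {n1, n2, n3}" and "0 < n1"
    and not_glued: "\<not> n3 dvd least_mult_in n2 {n1, n3} * n2"
    and w: "n1 * x + n2 * y + n3 * z \<in> apery S n1"
  shows "x = 0" and "y < least_mult_in n2 {n1, n3}"
proof -
  have not_apery: "n1 * x' + n2 * y' + n3 * z' \<notin> apery S n1" if "0 < x'" for x' y' z'
  proof -
    obtain x'' where "x' = Suc x''" using \<open>0 < x'\<close> not0_implies_Suc by blast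
    then have "n1 \<le> n1 * x' + n2 * y' + n3 * z'"
      and "n1 * x' + n2 * y' + n3 * z' - n1 = n1 * x'' + n2 * y' + n3 * z'" by simp_all
    then show ?thesis unfolding apery_def S in_monoid_gen_triple by blast
  qed
  show "x = 0" using not_apery[of x y z] w by auto
  show "y < least_mult_in n2 {n1, n3}"
  proof (rule ccontr)
    define c where "c = least_mult_in n2 {n1, n3}"
    assume "\<not> y < least_mult_in n2 {n1, n3}"
    then have y: "y = c + (y - c)" by (simp add: c_def)
    have "c * n2 \<in> monoid_gen {n1, n3}" unfolding c_def using \<open>0 < n1\<close> by (intro least_mult_in_mem) auto
    then obtain x' z' where rel: "c * n2 = n1 * x' + n3 * z'" unfolding in_monoid_gen_pair by blast
    have "0 < x'"
    proof (rule ccontr)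
      assume "\<not> 0 < x'"
      then have "c * n2 = n3 * z'" using rel by simp
      then show False using not_glued by (simp add: c_def)
    qed
    have "n1 * x + n2 * y + n3 * z = n1 * (x + x') + n2 * (y - c) + n3 * (z + z')"
      using rel by (subst y) (simp add: algebra_simps)
    then show False using not_apery[of "x + x'" "y - c" "z + z'"] w \<open>0 < x'\<close> by simp
  qed
qed

lemma least_mult_in_repr_bound:
  fixes n1 n2 n3 y z :: nat
  assumes "0 < n1" "0 < n3"
    and not_glued: "\<not> n3 dvd least_mult_in n2 {n1, n3} * n2"
    and rel: "least_mult_in n1 {n2, n3} * n1 = n2 * y + n3 * z" and "0 < z"
  shows "y < least_mult_in n2 {n1, n3}"
proof (rule ccontr)
  define c1 c2 where "c1 = least_mult_in n1 {n2, n3}" and "c2 = least_mult_in n2 {n1, n3}"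
  assume "\<not> y < least_mult_in n2 {n1, n3}"
  then have y: "y = c2 + (y - c2)" by (simp add: c2_def)
  have "c2 * n2 \<in> monoid_gen {n1, n3}" unfolding c2_def using \<open>0 < n1\<close> by (intro least_mult_in_mem) auto
  then obtain x' z' where rel2: "c2 * n2 = n1 * x' + n3 * z'" unfolding in_monoid_gen_pair by blast
  have "0 < x'"
  proof (rule ccontr)
    assume "\<not> 0 < x'"
    then have "c2 * n2 = n3 * z'" using rel2 by simp
    then show False using not_glued by (simp add: c2_def)
  qed
  have eq: "c1 * n1 = n1 * x' + n2 * (y - c2) + n3 * (z' + z)"
    using rel rel2 unfolding c1_def[symmetric] by (subst (asm) y) (simp add: algebra_simps)
  show False
  proof (cases "x' < c1")
    case True
    define d where "d = c1 - x'"
    then have "c1 = x' + d" "0 < d" "d < c1" using True \<open>0 < x'\<close> by auto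
    then have "d * n1 = n2 * (y - c2) + n3 * (z' + z)" using eq by (simp add: algebra_simps)
    then have "d * n1 \<in> monoid_gen {n2, n3}" unfolding in_monoid_gen_pair by blast
    then show False using less_least_mult_in_not_mem \<open>0 < d\<close> \<open>d < c1\<close> by (simp add: c1_def)
  next
    case False
    then have "c1 * n1 \<le> n1 * x'" by (simp add: mult.commute)
    then show False using eq \<open>0 < z\<close> \<open>0 < n3\<close> by simp
  qed
qed

lemma apery_max_shape:
  fixes n1 n2 n3 M K :: nat
  assumes S: "S = monoid_gen {n1, n2, n3}" and "0 < n1"
    and not_glued2: "\<not> n3 dvd least_mult_in n2 {n1, n3} * n2"
    and not_glued3: "\<not> n2 dvd least_mult_in n3 {n1, n2} * n3"
    and K: "least_mult_in n2 {n1, n3} = Suc K"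
    and M: "M \<in> apery S n1" and max: "\<And>w. w \<in> apery S n1 \<Longrightarrow> w \<le> M \<and> M - w \<in> S"
  obtains z where "M = K * n2 + n3 * z" "z < least_mult_in n3 {n1, n2}"
proof -
  have S': "S = monoid_gen {n1, n3, n2}" using S by (simp add: insert_commute)
  have "K * n2 \<in> apery S n1" using K \<open>0 < n1\<close> by (intro mult_in_apery_below_least_mult_in[OF S]) auto
  then have "K * n2 \<le> M" "M - K * n2 \<in> S" using max by auto
  then obtain x y z where xyz: "M - K * n2 = n1 * x + n2 * y + n3 * z"
    by (auto simp: S in_monoid_gen_triple)
  from \<open>K * n2 \<le> M\<close> have "M = (M - K * n2) + K * n2" by simp
  also have "\<dots> = n1 * x + n2 * (y + K) + n3 * z" using xyz by (simp add: algebra_simps)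
  finally have M_eq: "M = n1 * x + n2 * (y + K) + n3 * z" .
  then have "x = 0" "y + K < Suc K" using apery_repr_bound[OF S \<open>0 < n1\<close> not_glued2] M K by auto
  moreover have "z < least_mult_in n3 {n1, n2}"
    using apery_repr_bound(2)[OF S' \<open>0 < n1\<close> not_glued3, of x z "y + K"] M M_eq
    by (simp add: ac_simps)
  ultimately show thesis using M_eq by (intro that[of z]) (simp_all add: mult.commute)
qed

lemma apery_max_eq:
  fixes n1 n2 n3 M K2 K3 :: nat
  assumes S: "S = monoid_gen {n1, n2, n3}" and "0 < n1"
    and not_glued2: "\<not> n3 dvd least_mult_in n2 {n1, n3} * n2"
    and not_glued3: "\<not> n2 dvd least_mult_in n3 {n1, n2} * n3"
    and K2: "least_mult_in n2 {n1, n3} = Suc K2" and K3: "least_mult_in n3 {n1, n2} = Suc K3"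
    and M: "M \<in> apery S n1" and max: "\<And>w. w \<in> apery S n1 \<Longrightarrow> w \<le> M \<and> M - w \<in> S"
  shows "M = K2 * n2 + K3 * n3"
proof -
  have S': "S = monoid_gen {n1, n3, n2}" using S by (simp add: insert_commute)
  obtain z where Mz: "M = K2 * n2 + n3 * z" "z < least_mult_in n3 {n1, n2}"
    by (rule apery_max_shape[OF S \<open>0 < n1\<close> not_glued2 not_glued3 K2 M max])
  obtain y where My: "M = K3 * n3 + n2 * y" "y < least_mult_in n2 {n1, n3}"
    by (rule apery_max_shape[OF S' \<open>0 < n1\<close> not_glued3 not_glued2 K3 M max])
  obtain d e where d: "K2 = y + d" and e: "K3 = z + e"
    using My(2) Mz(2) K2 K3 by (metis less_Suc_eq_le le_add_diff_inverse)
  have de: "d * n2 = e * n3" using Mz(1) My(1) unfolding d e by (simp add: algebra_simps)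
  have "d = 0"
  proof (rule ccontr)
    assume "d \<noteq> 0"
    moreover have "d * n2 \<in> monoid_gen {n1, n3}"
      unfolding in_monoid_gen_pair de by (intro exI[of _ 0] exI[of _ e]) (simp add: mult.commute)
    moreover have "d < least_mult_in n2 {n1, n3}" using d K2 by simp
    ultimately show False using less_least_mult_in_not_mem by blast
  qed
  with de have "e * n3 = 0" by simp
  then show ?thesis using Mz(1) e \<open>d = 0\<close> de by (simp add: mult.commute)
qed

lemma symmetric_three_generated_glued:
  fixes n1 n2 n3 :: nat
  assumes "numerical_semigroup S" "frobenius S = int F" "symmetric_sg S"
    and S: "S = monoid_gen {n1, n2, n3}" and "0 < n1" "0 < n2" "0 < n3"
  shows "n3 dvd least_mult_in n2 {n1, n3} * n2 \<or> n2 dvd least_mult_in n3 {n1, n2} * n3 \<or>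
    n3 dvd least_mult_in n1 {n2, n3} * n1 \<or> n2 dvd least_mult_in n1 {n2, n3} * n1"
proof (rule ccontr)
  define c1 where "c1 = least_mult_in n1 {n2, n3}"
  assume "\<not> ?thesis"
  then have ng2: "\<not> n3 dvd least_mult_in n2 {n1, n3} * n2"
    and ng3: "\<not> n2 dvd least_mult_in n3 {n1, n2} * n3"
    and ng1: "\<not> n3 dvd c1 * n1" "\<not> n2 dvd c1 * n1" by (auto simp: c1_def)
  have "0 < least_mult_in n2 {n1, n3}" "0 < least_mult_in n3 {n1, n2}"
    using \<open>0 < n1\<close> by (intro least_mult_in_pos[of n1]; simp)+
  then obtain K2 K3 where K2: "least_mult_in n2 {n1, n3} = Suc K2"
    and K3: "least_mult_in n3 {n1, n2} = Suc K3" by (metis gr0_conv_Suc)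
  have M_eq: "F + n1 = K2 * n2 + K3 * n3"
    using symmetric_apery_max[OF assms(1-3) \<open>0 < n1\<close>] by (intro apery_max_eq[OF S \<open>0 < n1\<close> ng2 ng3 K2 K3])
  have "c1 * n1 \<in> monoid_gen {n2, n3}"
    unfolding c1_def using \<open>0 < n2\<close> by (intro least_mult_in_mem[of n2]) auto
  then obtain y z where rel: "c1 * n1 = n2 * y + n3 * z" unfolding in_monoid_gen_pair by blast
  have "0 < y" "0 < z" using rel ng1 by (auto intro!: Nat.gr0I)
  have "y < Suc K2" unfolding K2[symmetric]
    by (rule least_mult_in_repr_bound[OF \<open>0 < n1\<close> \<open>0 < n3\<close> ng2 rel[unfolded c1_def] \<open>0 < z\<close>])
  moreover have "least_mult_in n1 {n3, n2} * n1 = n3 * z + n2 * y"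
    using rel by (simp add: c1_def insert_commute add.commute)
  then have "z < Suc K3" unfolding K3[symmetric]
    by (rule least_mult_in_repr_bound[OF \<open>0 < n1\<close> \<open>0 < n2\<close> ng3 _ \<open>0 < y\<close>])
  ultimately obtain p q where "K2 = y + p" "K3 = z + q" by (metis less_Suc_eq_le le_add_diff_inverse)
  then have "F + n1 = n1 * c1 + n2 * p + n3 * q" using M_eq rel by (simp add: algebra_simps)
  moreover obtain c1' where "c1 = Suc c1'"
    using least_mult_in_pos[of n2 "{n2, n3}" n1] \<open>0 < n2\<close> gr0_conv_Suc by (auto simp: c1_def)
  ultimately have "F = n1 * c1' + n2 * p + n3 * q" by simp
  then have "F \<in> S" unfolding S in_monoid_gen_triple by blast
  then show False using frobenius_not_in[OF assms(1,2)] by blast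
qed

lemma poly_semigroup_cpoly_nonzero_symmetric:
  assumes "numerical_semigroup S" "embedding_dimension S \<le> 3" "frobenius S = int F"
    and "symmetric_sg S" and "cmod w < 1"
  shows "poly (semigroup_cpoly S) w \<noteq> 0"
proof -
  obtain n1 n2 n3 where pos: "0 < n1" "0 < n2" "0 < n3" and S: "S = monoid_gen {n1, n2, n3}"
    and gcd: "Gcd {n1, n2, n3} = 1"
    by (rule three_generators[OF assms(1,2)])
  note glued = poly_semigroup_cpoly_nonzero_glued[OF assms(1) _ _ _ _ _ _ assms(5)]
  have perms: "{n1, n3, n2} = {n1, n2, n3}" "{n2, n1, n3} = {n1, n2, n3}" "{n3, n1, n2} = {n1, n2, n3}"
    "{n3, n2} = {n2, n3}" by auto
  from symmetric_three_generated_glued[OF assms(1,3,4) S pos] show ?thesis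
  proof (elim disjE)
    assume "n3 dvd least_mult_in n2 {n1, n3} * n2"
    then show ?thesis using glued[OF S pos gcd] by blast
  next
    assume "n2 dvd least_mult_in n3 {n1, n2} * n3"
    then show ?thesis using glued[of n1 n3 n2] S pos gcd by (simp add: perms)
  next
    assume "n3 dvd least_mult_in n1 {n2, n3} * n1"
    then show ?thesis using glued[of n2 n1 n3] S pos gcd by (simp add: perms)
  next
    assume "n2 dvd least_mult_in n1 {n2, n3} * n1"
    then show ?thesis using glued[of n3 n1 n2] S pos gcd by (simp add: perms)
  qed
qed

lemma semigroup_cpoly_UNIV: "semigroup_cpoly UNIV = 1"
proof -
  have "numerical_semigroup UNIV" by (simp add: numerical_semigroup_def)
  then show ?thesis by (intro poly_eqI) (simp add: coeff_semigroup_cpoly coeff_1)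
qed

lemma symmetric_sg_UNIV: "symmetric_sg UNIV"
proof -
  have "x \<in> int ` UNIV \<union> (\<lambda>s. - 1 - s) ` int ` UNIV" for x :: int
  proof (cases "0 \<le> x")
    case True
    then show ?thesis by (intro UnI1 image_eqI[of _ int "nat x"]) auto
  next
    case False
    then have "- 1 - x \<in> int ` UNIV" by (intro image_eqI[of _ int "nat (- 1 - x)"]) auto
    then show ?thesis by (intro UnI2 image_eqI[of _ "\<lambda>s. - 1 - s" "- 1 - x"]) auto
  qed
  then have "int ` UNIV \<union> (\<lambda>s. - 1 - s) ` int ` UNIV = (UNIV :: int set)" by blast
  then show ?thesis by (simp add: symmetric_sg_def frobenius_def)
qed

theorem lemma5:
  fixes S :: "nat set"
  assumes "numerical_semigroup S"
    and "embedding_dimension S \<le> 3"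
  shows "cyclotomic_sg S \<longleftrightarrow> symmetric_sg S"
proof (cases "S = UNIV")
  case True
  then show ?thesis by (simp add: cyclotomic_sg_iff semigroup_cpoly_UNIV symmetric_sg_UNIV)
next
  case False
  then obtain F where F: "frobenius S = int F" by (simp add: frobenius_def)
  let ?P = "semigroup_cpoly S"
  note sym_iff = symmetric_sg_iff_reflect_poly[OF assms(1) F]
  show ?thesis
  proof
    assume "cyclotomic_sg S"
    then have "reflect_poly ?P = ?P"
      using real_coeff_semigroup_cpoly lead_coeff_semigroup_cpoly[OF assms(1) F]
        poly_semigroup_cpoly_0[OF assms(1)]
      by (intro reflect_poly_eq_if_roots_in_unit_disc) (auto simp: cyclotomic_sg_iff)
    then show "symmetric_sg S" using sym_iff by simp
  next
    assume "symmetric_sg S"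
    then have "reflect_poly ?P = ?P" using sym_iff by simp
    then show "cyclotomic_sg S"
      using poly_semigroup_cpoly_nonzero_symmetric[OF assms F \<open>symmetric_sg S\<close>]
      by (auto simp: cyclotomic_sg_iff intro: roots_in_unit_disc_if_reflect_poly_eq)
  qed
qed

end
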